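(* Let $G$ be a connected graph. (a) $O_{\rm SR}(G)=\mathcal{M}$ if and only if $G_{\rm SR}\cong xK_2$ for some positive integer $x$. (b) Let $H\in\{C_3,P_3,P_4,P_5\}$. If $G_{\rm SR}\cong H\cup xK_2$ (disjoint union) for some integer $x\ge 0$, then $O_{\rm SR}(G)=\mathcal{N}$. (c) Let $H^*\in\{K_m, C_m, P_{m+2}, xC_3\cup yP_3\}$, where $m\ge 4$ and $x+y\ge 2$. If $G_{\rm SR}$ contains $H^*$ as a subgraph, then $O_{\rm SR}(G)=\mathcal{B}$.
   Context: All graphs are finite, simple and undirected; $d(x,y)$ is the shortest-path distance. $P_n,C_n,K_n$ denote path, cycle and complete graph on $n$ vertices; $xK_2$ is the disjoint union of $x$ copies of $K_2$ and $\cup$ denotes disjoint union. A set $S\subseteq V(G)$ is a strong resolving set of a connected graph $G$ if for all distinct $x,y\in V(G)$ there exists $z\in S$ such that $x$ lies on a $y$–$z$ geodesic or $y$ lies on an $x$–$z$ geodesic. A vertex $u$ is maximally distant from $v$ if $d(u,v)\ge d(w,v)$ for every neighbor $w$ of $u$; $u,v$ are mutually maximally distant (MMD) if each is maximally distant from the other. The strong resolving graph $G_{\rm SR}$ has vertex set $\{x: x\text{ is MMD with some }y\}$ and edges exactly the MMD pairs. The Maker–Breaker strong resolving game on $G$: Maker and Breaker alternately select a not-yet-chosen vertex of $G$; Maker wins if the vertices he selects contain a strong resolving set of $G$, Breaker wins otherwise. In the M-game Maker moves first, in the B-game Breaker moves first. $O_{\rm SR}(G)=\mathcal{M}$ if Maker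 has a winning strategy in both games, $\mathcal{B}$ if Breaker has a winning strategy in both, and $\mathcal{N}$ if the first player has a winning strategy in each. *)

theory Defs
  imports Main
begin

type_synonym 'a graph = "'a set \<times> ('a \<Rightarrow> 'a \<Rightarrow> bool)"

definition simple_graph :: "'a graph \<Rightarrow> bool" where
  "simple_graph G \<longleftrightarrow> finite (fst G) \<and> (\<forall>x y. snd G x y \<longrightarrow> snd G y x)
     \<and> (\<forall>x. \<not> snd G x x) \<and> (\<forall>x y. snd G x y \<longrightarrow> x \<in> fst G \<and> y \<in> fst G)"

definition is_walk :: "'a graph \<Rightarrow> 'a list \<Rightarrow> bool" where
  "is_walk G xs \<longleftrightarrow> xs \<noteq> [] \<and> set xs \<subseteq> fst G
     \<and> (\<forall>i. Suc i < length xs \<longrightarrow> snd G (xs ! i) (xs ! Suc i))"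

definition walk_betw :: "'a graph \<Rightarrow> 'a \<Rightarrow> 'a \<Rightarrow> 'a list \<Rightarrow> bool" where
  "walk_betw G x y xs \<longleftrightarrow> is_walk G xs \<and> hd xs = x \<and> last xs = y"

definition connected_graph :: "'a graph \<Rightarrow> bool" where
  "connected_graph G \<longleftrightarrow> (\<forall>x\<in>fst G. \<forall>y\<in>fst G. \<exists>xs. walk_betw G x y xs)"

definition gdist :: "'a graph \<Rightarrow> 'a \<Rightarrow> 'a \<Rightarrow> nat" where
  "gdist G x y = (LEAST n. \<exists>xs. walk_betw G x y xs \<and> length xs = Suc n)"

definition geodesic :: "'a graph \<Rightarrow> 'a \<Rightarrow> 'a \<Rightarrow> 'a list \<Rightarrow> bool" where
  "geodesic G y z xs \<longleftrightarrow> walk_betw G y z xs \<and> length xs = Suc (gdist G y z)"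

definition on_geodesic :: "'a graph \<Rightarrow> 'a \<Rightarrow> 'a \<Rightarrow> 'a \<Rightarrow> bool" where
  "on_geodesic G x y z \<longleftrightarrow> (\<exists>xs. geodesic G y z xs \<and> x \<in> set xs)"

definition strong_resolving_set :: "'a graph \<Rightarrow> 'a set \<Rightarrow> bool" where
  "strong_resolving_set G S \<longleftrightarrow> S \<subseteq> fst G \<and>
     (\<forall>x\<in>fst G. \<forall>y\<in>fst G. x \<noteq> y \<longrightarrow>
        (\<exists>z\<in>S. on_geodesic G x y z \<or> on_geodesic G y x z))"

definition max_distant :: "'a graph \<Rightarrow> 'a \<Rightarrow> 'a \<Rightarrow> bool" where
  "max_distant G u v \<longleftrightarrow> u \<in> fst G \<and> v \<in> fst G \<and>
     (\<forall>w. snd G u w \<longrightarrow> gdist G w v \<le> gdist G u v)"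

definition mmd :: "'a graph \<Rightarrow> 'a \<Rightarrow> 'a \<Rightarrow> bool" where
  "mmd G u v \<longleftrightarrow> u \<noteq> v \<and> max_distant G u v \<and> max_distant G v u"

definition strong_resolving_graph :: "'a graph \<Rightarrow> 'a graph" where
  "strong_resolving_graph G = ({x \<in> fst G. \<exists>y. mmd G x y}, mmd G)"

text \<open>Maker--Breaker strong resolving game. Position: (Maker to move?, Maker's set, Breaker's set).
  The game ends when all vertices are chosen; Maker wins iff his set contains an SRS.\<close>
inductive maker_wins :: "'a graph \<Rightarrow> bool \<Rightarrow> 'a set \<Rightarrow> 'a set \<Rightarrow> bool" for G where
  end_game: "fst G - Mk - Br = {} \<Longrightarrow> \<exists>S\<subseteq>Mk. strong_resolving_set G S \<Longrightarrow> maker_wins G t Mk Br"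
| maker_move: "v \<in> fst G - Mk - Br \<Longrightarrow> maker_wins G False (insert v Mk) Br \<Longrightarrow> maker_wins G True Mk Br"
| breaker_move: "fst G - Mk - Br \<noteq> {} \<Longrightarrow> \<forall>v\<in>fst G - Mk - Br. maker_wins G True Mk (insert v Br)
     \<Longrightarrow> maker_wins G False Mk Br"

inductive breaker_wins :: "'a graph \<Rightarrow> bool \<Rightarrow> 'a set \<Rightarrow> 'a set \<Rightarrow> bool" for G where
  end_game: "fst G - Mk - Br = {} \<Longrightarrow> \<not> (\<exists>S\<subseteq>Mk. strong_resolving_set G S) \<Longrightarrow> breaker_wins G t Mk Br"
| breaker_move: "v \<in> fst G - Mk - Br \<Longrightarrow> breaker_wins G True Mk (insert v Br) \<Longrightarrow> breaker_wins G False Mk Br"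
| maker_move: "fst G - Mk - Br \<noteq> {} \<Longrightarrow> \<forall>v\<in>fst G - Mk - Br. breaker_wins G False (insert v Mk) Br
     \<Longrightarrow> breaker_wins G True Mk Br"

text \<open>M-game: Maker moves first (True); B-game: Breaker moves first (False).\<close>
definition O_SR_M :: "'a graph \<Rightarrow> bool" where
  "O_SR_M G \<longleftrightarrow> maker_wins G True {} {} \<and> maker_wins G False {} {}"

definition O_SR_B :: "'a graph \<Rightarrow> bool" where
  "O_SR_B G \<longleftrightarrow> breaker_wins G True {} {} \<and> breaker_wins G False {} {}"

definition O_SR_N :: "'a graph \<Rightarrow> bool" where
  "O_SR_N G \<longleftrightarrow> maker_wins G True {} {} \<and> breaker_wins G False {} {}"

definition graph_iso :: "'a graph \<Rightarrow> 'b graph \<Rightarrow> bool" where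
  "graph_iso G H \<longleftrightarrow> (\<exists>f. bij_betw f (fst G) (fst H) \<and>
     (\<forall>x\<in>fst G. \<forall>y\<in>fst G. snd G x y \<longleftrightarrow> snd H (f x) (f y)))"

definition subgraph_of :: "'b graph \<Rightarrow> 'a graph \<Rightarrow> bool" where
  "subgraph_of H G \<longleftrightarrow> (\<exists>f. inj_on f (fst H) \<and> f ` fst H \<subseteq> fst G \<and>
     (\<forall>x\<in>fst H. \<forall>y\<in>fst H. snd H x y \<longrightarrow> snd G (f x) (f y)))"

definition path_graph :: "nat \<Rightarrow> nat graph" where
  "path_graph n = ({..<n}, \<lambda>i j. i < n \<and> j < n \<and> (j = Suc i \<or> i = Suc j))"

definition cycle_graph :: "nat \<Rightarrow> nat graph" where
  "cycle_graph n = ({..<n}, \<lambda>i j. i < n \<and> j < n \<and> (j = Suc i mod n \<or> i = Suc j mod n))"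

definition complete_graph :: "nat \<Rightarrow> nat graph" where
  "complete_graph n = ({..<n}, \<lambda>i j. i < n \<and> j < n \<and> i \<noteq> j)"

fun sum_adj :: "('a \<Rightarrow> 'a \<Rightarrow> bool) \<Rightarrow> ('b \<Rightarrow> 'b \<Rightarrow> bool) \<Rightarrow> 'a + 'b \<Rightarrow> 'a + 'b \<Rightarrow> bool" where
  "sum_adj E1 E2 (Inl a) (Inl b) = E1 a b"
| "sum_adj E1 E2 (Inr a) (Inr b) = E2 a b"
| "sum_adj E1 E2 _ _ = False"

definition gunion :: "'a graph \<Rightarrow> 'b graph \<Rightarrow> ('a + 'b) graph" where
  "gunion G H = (Inl ` fst G \<union> Inr ` fst H, sum_adj (snd G) (snd H))"

definition copies :: "nat \<Rightarrow> 'a graph \<Rightarrow> ('a \<times> nat) graph" where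
  "copies x H = (fst H \<times> {..<x}, \<lambda>(a, i) (b, j). i = j \<and> i < x \<and> snd H a b)"

end

theory Submission
  imports Defs
begin

text \<open>Every pair \<open>x, y\<close> of distinct vertices lies, in this order, on a geodesic between some
  mutually maximally distant pair \<open>u, v\<close>, while no vertex of an MMD pair lies on a geodesic
  from its partner to a third vertex. Hence a set is strongly resolving iff it meets every MMD
  pair, that is, iff it is a vertex cover of \<open>G\<^sub>S\<^sub>R\<close>, and the game is the Maker--Breaker vertex
  cover game on \<open>G\<^sub>S\<^sub>R\<close>.

  Breaker wins once he owns both ends of an edge of \<open>G\<^sub>S\<^sub>R\<close>. So he wins if he may move first and
  some \<open>P\<^sub>3\<close> is free (he takes its centre and then one of its ends), and even when Maker moves
  first if every vertex is avoided by some \<open>P\<^sub>3\<close>; this gives (c), where the listed graphs have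
  this property. Conversely, if \<open>G\<^sub>S\<^sub>R\<close> minus Maker's vertices is a matching, Maker wins by
  answering every Breaker move with its partner. Part (a) follows because a graph without
  \<open>P\<^sub>3\<close> is a matching, and in (b) Maker first takes the vertex of \<open>H\<close> whose removal leaves a
  matching, while Breaker moving first still finds a free \<open>P\<^sub>3\<close>.\<close>

section \<open>Walks and distances\<close>

lemma is_walk_singleton [simp]: "is_walk G [x] \<longleftrightarrow> x \<in> fst G"
  by (auto simp: is_walk_def)

lemma is_walk_Cons_Cons [simp]:
  "is_walk G (x # y # xs) \<longleftrightarrow> x \<in> fst G \<and> snd G x y \<and> is_walk G (y # xs)"
  by (auto simp: is_walk_def less_Suc_eq_0_disj)

lemma is_walk_append:
  "is_walk G xs \<Longrightarrow> is_walk G ys \<Longrightarrow> last xs = hd ys \<Longrightarrow> is_walk G (xs @ tl ys)"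
proof (induction xs rule: induct_list012)
  case 1 then show ?case by (simp add: is_walk_def)
next
  case (2 x) then show ?case by (cases ys) auto
next
  case (3 x y zs) then show ?case by auto
qed

lemma is_walk_rev:
  assumes "simple_graph G" "is_walk G xs"
  shows "is_walk G (rev xs)"
proof -
  have "snd G (rev xs ! i) (rev xs ! Suc i)" if "Suc i < length xs" for i
  proof -
    define j where "j = length xs - Suc (Suc i)"
    have "snd G (xs ! j) (xs ! Suc j)"
      using assms(2) that unfolding is_walk_def j_def by auto
    moreover have "rev xs ! i = xs ! Suc j" "rev xs ! Suc i = xs ! j"
      using that by (auto simp: rev_nth j_def Suc_diff_Suc)
    ultimately show ?thesis using assms(1) by (simp add: simple_graph_def)
  qed
  then show ?thesis using assms(2) by (auto simp: is_walk_def)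
qed

lemma walk_betw_append:
  assumes "walk_betw G x y xs" "walk_betw G y z ys"
  shows "walk_betw G x z (xs @ tl ys)" and "length (xs @ tl ys) = length xs + length ys - 1"
proof -
  have "xs \<noteq> []" "ys \<noteq> []" using assms by (auto simp: walk_betw_def is_walk_def)
  with assms show "walk_betw G x z (xs @ tl ys)"
    using is_walk_append[of G xs ys] by (cases ys) (auto simp: walk_betw_def)
  show "length (xs @ tl ys) = length xs + length ys - 1"
    using \<open>ys \<noteq> []\<close> by (cases ys) auto
qed

lemma walk_betw_take:
  "walk_betw G x y xs \<Longrightarrow> i < length xs \<Longrightarrow> walk_betw G x (xs ! i) (take (Suc i) xs)"
proof -
  assume "walk_betw G x y xs" "i < length xs"
  moreover have "last (take (Suc i) xs) = xs ! i"
    using \<open>i < length xs\<close> by (simp add: take_Suc_conv_app_nth)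
  ultimately show ?thesis by (auto simp: walk_betw_def is_walk_def dest: in_set_takeD)
qed

lemma walk_betw_drop:
  "walk_betw G x y xs \<Longrightarrow> i < length xs \<Longrightarrow> walk_betw G (xs ! i) y (drop i xs)"
  by (auto simp: walk_betw_def is_walk_def hd_drop_conv_nth dest: in_set_dropD)

locale connected_simple_graph =
  fixes G :: "'a graph"
  assumes simple: "simple_graph G" and connected: "connected_graph G"
begin

abbreviation "V \<equiv> fst G"
abbreviation "E \<equiv> snd G"
abbreviation "d \<equiv> gdist G"

lemma finite_V: "finite V"
  using simple by (simp add: simple_graph_def)

lemma edge_in_V: "E x y \<Longrightarrow> x \<in> V \<and> y \<in> V"
  using simple by (simp add: simple_graph_def)

lemma walk_betw_in_V: "walk_betw G x y xs \<Longrightarrow> x \<in> V \<and> y \<in> V"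
  by (auto simp: walk_betw_def is_walk_def)

lemma shortest_walk:
  assumes "x \<in> V" "y \<in> V"
  obtains xs where "walk_betw G x y xs" "length xs = Suc (d x y)"
proof -
  obtain xs where "walk_betw G x y xs"
    using connected assms by (auto simp: connected_graph_def)
  moreover from this have "xs \<noteq> []" by (simp add: walk_betw_def is_walk_def)
  ultimately have "\<exists>n xs. walk_betw G x y xs \<and> length xs = Suc n"
    by (intro exI[of _ "length xs - 1"] exI[of _ xs]) simp
  from LeastI_ex[OF this] show ?thesis
    using that unfolding gdist_def by blast
qed

lemma gdist_le_walk:
  assumes "walk_betw G x y xs"
  shows "d x y \<le> length xs - 1"
proof -
  have "xs \<noteq> []" using assms by (simp add: walk_betw_def is_walk_def)
  with assms show ?thesis unfolding gdist_def by (intro Least_le exI[of _ xs]) simp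
qed

lemma gdist_self [simp]: "x \<in> V \<Longrightarrow> d x x = 0"
  using gdist_le_walk[of x x "[x]"] by (simp add: walk_betw_def)

lemma gdist_eq_0_iff:
  assumes "x \<in> V" "y \<in> V"
  shows "d x y = 0 \<longleftrightarrow> x = y"
proof
  assume "d x y = 0"
  then obtain xs where "walk_betw G x y xs" "length xs = 1"
    using shortest_walk[OF assms] by auto
  then show "x = y" by (cases xs) (auto simp: walk_betw_def)
qed (use assms in simp)

lemma gdist_commute:
  assumes "x \<in> V" "y \<in> V"
  shows "d x y = d y x"
proof -
  have "d a b \<le> d b a" if "a \<in> V" "b \<in> V" for a b
  proof -
    obtain xs where "walk_betw G b a xs" "length xs = Suc (d b a)"
      using shortest_walk[of b a] \<open>a \<in> V\<close> \<open>b \<in> V\<close> by blast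
    moreover from this(1) have "walk_betw G a b (rev xs)"
      using is_walk_rev[OF simple] by (auto simp: walk_betw_def hd_rev last_rev)
    ultimately show ?thesis using gdist_le_walk[of a b "rev xs"] by simp
  qed
  with assms show ?thesis by (simp add: le_antisym)
qed

lemma gdist_triangle:
  assumes "x \<in> V" "y \<in> V" "z \<in> V"
  shows "d x z \<le> d x y + d y z"
proof -
  obtain xs where xs: "walk_betw G x y xs" "length xs = Suc (d x y)"
    using shortest_walk assms by blast
  obtain ys where ys: "walk_betw G y z ys" "length ys = Suc (d y z)"
    using shortest_walk assms by blast
  show ?thesis
    using gdist_le_walk[OF walk_betw_append(1)[OF xs(1) ys(1)]]
      walk_betw_append(2)[OF xs(1) ys(1)] xs(2) ys(2) by simp
qed

lemma gdist_edge: "E x y \<Longrightarrow> d x y \<le> 1"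
  using gdist_le_walk[of x y "[x, y]"] edge_in_V by (simp add: walk_betw_def)

lemma gdist_step_towards:
  assumes "x \<in> V" "z \<in> V" "x \<noteq> z"
  obtains w where "E x w" "Suc (d w z) = d x z"
proof -
  obtain xs where xs: "walk_betw G x z xs" "length xs = Suc (d x z)"
    using shortest_walk assms by blast
  then obtain w rest where xs_eq: "xs = x # w # rest"
    using assms(3) by (cases xs; cases "tl xs") (auto simp: walk_betw_def)
  with xs have "E x w" and "walk_betw G w z (w # rest)"
    by (auto simp: walk_betw_def)
  then have "d w z \<le> length rest" "d x z \<le> d x w + d w z" "d x w \<le> 1"
    using gdist_le_walk[of w z "w # rest"] gdist_triangle[of x w z] gdist_edge edge_in_V assms
    by auto
  with xs xs_eq \<open>E x w\<close> that show ?thesis by simp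
qed

lemma on_geodesic_iff:
  "on_geodesic G x y z \<longleftrightarrow> x \<in> V \<and> y \<in> V \<and> z \<in> V \<and> d y x + d x z = d y z"
proof
  assume "on_geodesic G x y z"
  then obtain xs where xs: "walk_betw G y z xs" "length xs = Suc (d y z)" "x \<in> set xs"
    by (auto simp: on_geodesic_def geodesic_def)
  then obtain i where i: "i < length xs" "xs ! i = x" by (metis in_set_conv_nth)
  have "d y x \<le> i" "d x z \<le> length xs - 1 - i"
    using gdist_le_walk[OF walk_betw_take[OF xs(1) i(1)]]
      gdist_le_walk[OF walk_betw_drop[OF xs(1) i(1)]] i by simp_all
  moreover have V: "x \<in> V" "y \<in> V" "z \<in> V"
    using walk_betw_in_V walk_betw_take[OF xs(1) i(1)] xs(1) i(2) by blast+
  moreover have "d y z \<le> d y x + d x z" using gdist_triangle V by blast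
  ultimately show "x \<in> V \<and> y \<in> V \<and> z \<in> V \<and> d y x + d x z = d y z"
    using xs(2) i(1) by linarith
next
  assume *: "x \<in> V \<and> y \<in> V \<and> z \<in> V \<and> d y x + d x z = d y z"
  obtain xs where xs: "walk_betw G y x xs" "length xs = Suc (d y x)"
    using shortest_walk * by blast
  obtain ys where ys: "walk_betw G x z ys" "length ys = Suc (d x z)"
    using shortest_walk * by blast
  have "x \<in> set (xs @ tl ys)"
    using xs(1) by (auto simp: walk_betw_def is_walk_def)
  moreover have "length (xs @ tl ys) = Suc (d y z)"
    using walk_betw_append(2)[OF xs(1) ys(1)] xs(2) ys(2) * by simp
  ultimately show "on_geodesic G x y z"
    using walk_betw_append(1)[OF xs(1) ys(1)] by (auto simp: on_geodesic_def geodesic_def)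
qed

end

section \<open>Strong resolving sets and vertex covers of the strong resolving graph\<close>

definition vertex_cover :: "'b graph \<Rightarrow> 'b set \<Rightarrow> bool" where
  "vertex_cover H C \<longleftrightarrow> (\<forall>x y. snd H x y \<longrightarrow> x \<in> C \<or> y \<in> C)"

lemma mmd_commute: "mmd G u v \<Longrightarrow> mmd G v u"
  by (auto simp: mmd_def)

lemma mmd_in_V: "mmd G u v \<Longrightarrow> u \<in> fst G \<and> v \<in> fst G \<and> u \<noteq> v"
  by (auto simp: mmd_def max_distant_def)

context connected_simple_graph
begin

abbreviation "SR \<equiv> strong_resolving_graph G"

lemma SR_simps [simp]: "fst SR = {x \<in> V. \<exists>y. mmd G x y}" "snd SR = mmd G"
  by (simp_all add: strong_resolving_graph_def)

lemma on_geodesic_mmd: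
  assumes "mmd G u v" "on_geodesic G u v z"
  shows "z = u"
proof (rule ccontr)
  assume "z \<noteq> u"
  have V: "u \<in> V" "v \<in> V" "z \<in> V" and geo: "d v u + d u z = d v z"
    using mmd_in_V[OF assms(1)] assms(2) by (auto simp: on_geodesic_iff)
  obtain w where w: "E u w" "Suc (d w z) = d u z"
    by (rule gdist_step_towards[OF V(1,3) \<open>z \<noteq> u\<close>[symmetric]])
  then have "w \<in> V" using edge_in_V by blast
  have "d v z \<le> d v w + d w z" using gdist_triangle V \<open>w \<in> V\<close> by blast
  moreover have "d w v \<le> d u v" using assms(1) w(1) by (auto simp: mmd_def max_distant_def)
  moreover have "d v w = d w v" "d v u = d u v" using gdist_commute V \<open>w \<in> V\<close> by auto
  ultimately show False using geo w(2) by linarith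
qed

lemma strong_resolving_set_vertex_cover:
  assumes "strong_resolving_set G S"
  shows "vertex_cover SR S"
  unfolding vertex_cover_def SR_simps
proof (intro allI impI)
  fix u v assume uv: "mmd G u v"
  then obtain z where "z \<in> S" "on_geodesic G u v z \<or> on_geodesic G v u z"
    using assms mmd_in_V[OF uv] unfolding strong_resolving_set_def by blast
  then show "u \<in> S \<or> v \<in> S"
    using on_geodesic_mmd[OF uv] on_geodesic_mmd[OF mmd_commute[OF uv]] by blast
qed

lemma max_distant_if_farthest:
  assumes V: "u \<in> V" "v \<in> V" "x \<in> V" "y \<in> V"
    and geo: "d u v = d u x + d x y + d y v"
    and farthest: "\<And>u'. u' \<in> V \<Longrightarrow> d u' v = d u' x + d x y + d y v \<Longrightarrow> d u' v \<le> d u v"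
  shows "max_distant G u v"
  unfolding max_distant_def
proof (intro conjI allI impI V)
  fix w assume "E u w"
  then have "w \<in> V" using edge_in_V by blast
  then have "d w u \<le> 1" using gdist_edge[OF \<open>E u w\<close>] gdist_commute V by simp
  have "d w v \<le> d w x + d x y + d y v" "d w x \<le> d w u + d u x"
    using gdist_triangle[of w x v] gdist_triangle[of x y v] gdist_triangle[of w u x] V \<open>w \<in> V\<close>
    by linarith+
  then show "d w v \<le> d u v"
    using farthest[OF \<open>w \<in> V\<close>] geo \<open>d w u \<le> 1\<close> by linarith
qed

lemma mmd_pair_through:
  assumes "x \<in> V" "y \<in> V" "x \<noteq> y"
  obtains u v where "mmd G u v" "d u v = d u x + d x y + d y v"
proof -
  \<comment> \<open>among the pairs with \<open>x, y\<close> in this order on a \<open>u\<close>--\<open>v\<close> geodesic, a farthest one is MMD\<close>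
  define P where "P = {(u, v) \<in> V \<times> V. d u v = d u x + d x y + d y v}"
  define f where "f = (\<lambda>(u, v). d u v)"
  have "finite P"
    by (rule finite_subset[of _ "V \<times> V"]) (auto simp: P_def finite_V)
  have "(x, y) \<in> P"
    using assms by (simp add: P_def)
  have "\<forall>q. q \<in> P \<longrightarrow> f q < Suc (Max (f ` P))"
    using \<open>finite P\<close> by (auto intro: le_imp_less_Suc Max_ge)
  then obtain p where "p \<in> P" and max: "\<And>q. q \<in> P \<Longrightarrow> f q \<le> f p"
    using ex_has_greatest_nat[of "\<lambda>q. q \<in> P" "(x, y)" f] \<open>(x, y) \<in> P\<close> by blast
  obtain u v where p: "p = (u, v)" by fastforce
  have V: "u \<in> V" "v \<in> V" and geo: "d u v = d u x + d x y + d y v"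
    using \<open>p \<in> P\<close> by (auto simp: P_def p)
  have "d x y \<noteq> 0" using gdist_eq_0_iff assms by blast
  then have "u \<noteq> v" using geo V by auto
  moreover have "max_distant G u v"
    using max[of "(_, v)"] V assms geo by (intro max_distant_if_farthest) (auto simp: P_def f_def p)
  moreover have "max_distant G v u"
  proof (rule max_distant_if_farthest[where x = y and y = x])
    fix v' assume "v' \<in> V" "d v' u = d v' y + d y x + d x u"
    then show "d v' u \<le> d v u"
      using max[of "(u, v')"] V assms gdist_commute by (auto simp: P_def f_def p)
  qed (use V assms geo gdist_commute in auto)
  ultimately show ?thesis using that geo by (auto simp: mmd_def)
qed

lemma vertex_cover_strong_resolving_set:
  assumes "vertex_cover SR C"
  shows "strong_resolving_set G (C \<inter> V)"
  unfolding strong_resolving_set_def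
proof (intro conjI ballI impI)
  fix x y assume xy: "x \<in> V" "y \<in> V" "x \<noteq> y"
  obtain u v where uv: "mmd G u v" and geo: "d u v = d u x + d x y + d y v"
    using mmd_pair_through[OF xy] by blast
  have V: "u \<in> V" "v \<in> V" using mmd_in_V[OF uv] by simp_all
  have "d u v \<le> d u y + d y v" "d u y \<le> d u x + d x y"
    "d u v \<le> d u x + d x v" "d x v \<le> d x y + d y v"
    using gdist_triangle[of u y v] gdist_triangle[of u x y] gdist_triangle[of u x v]
      gdist_triangle[of x y v] V xy by simp_all
  moreover have "d y x = d x y" "d x u = d u x" "d y u = d u y"
    using gdist_commute[of y x] gdist_commute[of x u] gdist_commute[of y u] V xy by simp_all
  ultimately have "d y x + d x u = d y u" "d x y + d y v = d x v"
    using geo by linarith+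
  then have "on_geodesic G x y u" "on_geodesic G y x v"
    using V xy by (simp_all add: on_geodesic_iff)
  moreover have "u \<in> C \<or> v \<in> C"
    using assms uv by (simp add: vertex_cover_def)
  ultimately show "\<exists>z\<in>C \<inter> V. on_geodesic G x y z \<or> on_geodesic G y x z"
    using V by blast
qed blast

lemma contains_strong_resolving_set_iff:
  "(\<exists>S\<subseteq>M. strong_resolving_set G S) \<longleftrightarrow> vertex_cover SR M"
proof
  assume "\<exists>S\<subseteq>M. strong_resolving_set G S"
  then obtain S where "S \<subseteq> M" "strong_resolving_set G S" by blast
  then show "vertex_cover SR M"
    using strong_resolving_set_vertex_cover unfolding vertex_cover_def by blast
next
  assume "vertex_cover SR M"
  then show "\<exists>S\<subseteq>M. strong_resolving_set G S"
    using vertex_cover_strong_resolving_set Int_lower1 by blast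
qed

end

section \<open>Paths on three vertices and matchings\<close>

definition P3_in :: "'b graph \<Rightarrow> 'b \<Rightarrow> 'b \<Rightarrow> 'b \<Rightarrow> bool" where
  "P3_in H a b c \<longleftrightarrow> a \<in> fst H \<and> b \<in> fst H \<and> c \<in> fst H \<and> snd H b a \<and> snd H b c \<and> a \<noteq> c"

definition P3_robust :: "'b graph \<Rightarrow> bool" where
  "P3_robust H \<longleftrightarrow> (\<exists>a b c. P3_in H a b c) \<and> (\<forall>j\<in>fst H. \<exists>a b c. P3_in H a b c \<and> j \<notin> {a, b, c})"

definition matching_outside :: "'b graph \<Rightarrow> 'b set \<Rightarrow> bool" where
  "matching_outside H A \<longleftrightarrow>
     (\<forall>x\<in>fst H - A. \<forall>y\<in>fst H - A. \<forall>z\<in>fst H - A. snd H x y \<longrightarrow> snd H x z \<longrightarrow> y = z)"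

lemma P3_robust_avoiding:
  assumes "P3_robust H"
  obtains a b c where "P3_in H a b c" "v \<notin> {a, b, c}"
  using assms by (cases "v \<in> fst H") (auto simp: P3_robust_def P3_in_def)

lemma matching_outside_empty_iff: "matching_outside H {} \<longleftrightarrow> (\<nexists>a b c. P3_in H a b c)"
  by (auto simp: matching_outside_def P3_in_def)

lemma graph_iso_imp_subgraph_of:
  assumes "graph_iso A B"
  shows "subgraph_of B A"
proof -
  obtain f where f: "bij_betw f (fst A) (fst B)"
    and adj: "\<forall>x\<in>fst A. \<forall>y\<in>fst A. snd A x y \<longleftrightarrow> snd B (f x) (f y)"
    using assms by (auto simp: graph_iso_def)
  let ?g = "inv_into (fst A) f"
  have "bij_betw ?g (fst B) (fst A)" using bij_betw_inv_into[OF f] .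
  moreover have "\<forall>p\<in>fst B. \<forall>q\<in>fst B. snd B p q \<longrightarrow> snd A (?g p) (?g q)"
    using adj bij_betw_inv_into_right[OF f] bij_betwE[OF calculation] by metis
  ultimately show ?thesis
    unfolding subgraph_of_def bij_betw_def by (intro exI[of _ ?g]) auto
qed

lemma subgraph_of_P3_embedding:
  assumes "subgraph_of H K"
  obtains f where "inj_on f (fst H)" "f ` fst H \<subseteq> fst K"
    "\<And>a b c. P3_in H a b c \<Longrightarrow> P3_in K (f a) (f b) (f c)"
proof -
  obtain f where f: "inj_on f (fst H)" "f ` fst H \<subseteq> fst K"
    and adj: "\<forall>x\<in>fst H. \<forall>y\<in>fst H. snd H x y \<longrightarrow> snd K (f x) (f y)"
    using assms by (auto simp: subgraph_of_def)
  have P3: "P3_in K (f a) (f b) (f c)" if "P3_in H a b c" for a b c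
  proof -
    have H: "a \<in> fst H" "b \<in> fst H" "c \<in> fst H" "snd H b a" "snd H b c" "a \<noteq> c"
      using that by (simp_all add: P3_in_def)
    then have "f a \<noteq> f c" using inj_on_contraD[OF f(1)] by blast
    with H f(2) adj show ?thesis by (auto simp: P3_in_def)
  qed
  show ?thesis by (rule that[OF f P3])
qed

lemma P3_in_subgraph:
  assumes "subgraph_of H K" "P3_in H a b c"
  shows "\<exists>a' b' c'. P3_in K a' b' c'"
proof -
  obtain f where "inj_on f (fst H)" "f ` fst H \<subseteq> fst K"
    and "\<And>a b c. P3_in H a b c \<Longrightarrow> P3_in K (f a) (f b) (f c)"
    using subgraph_of_P3_embedding[OF assms(1)] by blast
  with assms(2) show ?thesis by blast
qed

lemma P3_robust_subgraph:
  assumes "subgraph_of H K" "P3_robust H"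
  shows "P3_robust K"
proof -
  obtain f where inj: "inj_on f (fst H)" and "f ` fst H \<subseteq> fst K"
    and P3: "\<And>a b c. P3_in H a b c \<Longrightarrow> P3_in K (f a) (f b) (f c)"
    using subgraph_of_P3_embedding[OF assms(1)] by blast
  have "\<exists>a b c. P3_in K a b c \<and> j \<notin> {a, b, c}" for j
  proof (cases "j \<in> f ` fst H")
    case True
    then obtain i where i: "i \<in> fst H" "j = f i" by blast
    obtain a b c where abc: "P3_in H a b c" "i \<notin> {a, b, c}"
      using P3_robust_avoiding[OF assms(2)] by blast
    then have "{a, b, c} \<subseteq> fst H" by (simp add: P3_in_def)
    then have "j \<notin> {f a, f b, f c}"
      using i abc(2) inj_on_contraD[OF inj] by auto
    with P3[OF abc(1)] show ?thesis by blast
  next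
    case False
    obtain a b c where abc: "P3_in H a b c"
      using assms(2) by (auto simp: P3_robust_def)
    then have "{a, b, c} \<subseteq> fst H" by (simp add: P3_in_def)
    with False have "j \<notin> {f a, f b, f c}" by auto
    with P3[OF abc] show ?thesis by blast
  qed
  then show ?thesis unfolding P3_robust_def by blast
qed

lemma P3_robust_if_disjoint:
  assumes "P3_in H a b c" "P3_in H a' b' c'" "{a, b, c} \<inter> {a', b', c'} = {}"
  shows "P3_robust H"
  using assms unfolding P3_robust_def by blast

lemma P3_in_cycle_graph_after:
  assumes "m \<ge> 4" "j < m"
  shows "P3_in (cycle_graph m) ((j + 1) mod m) ((j + 2) mod m) ((j + 3) mod m)
    \<and> j \<notin> {(j + 1) mod m, (j + 2) mod m, (j + 3) mod m}"
proof -
  consider "j + 3 < m" | "j + 3 = m" | "j + 2 = m" | "j + 1 = m"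
    using assms by linarith
  then show ?thesis
    using assms(1) by cases (auto simp: P3_in_def cycle_graph_def mod_Suc eval_nat_numeral)
qed

lemma P3_robust_cycle_graph:
  assumes "m \<ge> 4"
  shows "P3_robust (cycle_graph m)"
proof -
  have avoid: "\<exists>a b c. P3_in (cycle_graph m) a b c \<and> j \<notin> {a, b, c}" if "j < m" for j
    using P3_in_cycle_graph_after[OF assms that] by blast
  have "0 < m" using assms by simp
  then have "\<exists>a b c. P3_in (cycle_graph m) a b c"
    using avoid by blast
  moreover have "fst (cycle_graph m) = {..<m}"
    by (simp add: cycle_graph_def)
  ultimately show ?thesis
    using avoid unfolding P3_robust_def by simp
qed

lemma P3_robust_complete_graph:
  assumes "m \<ge> 4"
  shows "P3_robust (complete_graph m)"
proof (rule P3_robust_subgraph[OF _ P3_robust_cycle_graph[OF assms]])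
  have "i \<noteq> Suc i mod m" if "i < m" for i
    using assms that by (cases "Suc i = m") simp_all
  then show "subgraph_of (cycle_graph m) (complete_graph m)"
    unfolding subgraph_of_def cycle_graph_def complete_graph_def
    by (intro exI[of _ id]) (auto dest: sym)
qed

lemma P3_robust_path_graph:
  assumes "n \<ge> 6"
  shows "P3_robust (path_graph n)"
  by (rule P3_robust_if_disjoint[of _ 0 1 2 3 4 5])
    (use assms in \<open>auto simp: P3_in_def path_graph_def\<close>)

lemma P3_robust_triangles_and_cherries:
  assumes "x + y \<ge> 2"
  shows "P3_robust (gunion (copies x (cycle_graph 3)) (copies y (path_graph 3)))"
    (is "P3_robust ?H")
proof -
  have tri: "P3_in ?H (Inl (0, i)) (Inl (1, i)) (Inl (2, i))" if "i < x" for i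
    using that by (simp add: P3_in_def gunion_def copies_def cycle_graph_def)
  have cherry: "P3_in ?H (Inr (0, i)) (Inr (1, i)) (Inr (2, i))" if "i < y" for i
    using that by (simp add: P3_in_def gunion_def copies_def path_graph_def)
  consider "x \<ge> 2" | "y \<ge> 2" | "x \<ge> 1 \<and> y \<ge> 1" using assms by linarith
  then show ?thesis
  proof cases
    case 1 then show ?thesis by (intro P3_robust_if_disjoint[OF tri[of 0] tri[of 1]]) auto
  next
    case 2 then show ?thesis by (intro P3_robust_if_disjoint[OF cherry[of 0] cherry[of 1]]) auto
  next
    case 3 then show ?thesis by (intro P3_robust_if_disjoint[OF tri[of 0] cherry[of 0]]) auto
  qed
qed

lemma matching_outside_iso:
  assumes f: "bij_betw f (fst A) (fst B)"
    and adj: "\<forall>x\<in>fst A. \<forall>y\<in>fst A. snd A x y \<longleftrightarrow> snd B (f x) (f y)"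
    and "C \<subseteq> fst A" "matching_outside B (f ` C)"
  shows "matching_outside A C"
  unfolding matching_outside_def
proof (intro ballI impI)
  fix x y z assume xyz: "x \<in> fst A - C" "y \<in> fst A - C" "z \<in> fst A - C"
    and "snd A x y" "snd A x z"
  have inj: "inj_on f (fst A)" and img: "f ` fst A = fst B"
    using f by (simp_all add: bij_betw_def)
  have "f x \<in> fst B - f ` C" "f y \<in> fst B - f ` C" "f z \<in> fst B - f ` C"
    using xyz \<open>C \<subseteq> fst A\<close> img inj_on_image_mem_iff[OF inj] by auto
  moreover have "snd B (f x) (f y)" "snd B (f x) (f z)"
    using adj xyz \<open>snd A x y\<close> \<open>snd A x z\<close> by auto
  ultimately have "f y = f z"
    using assms(4) unfolding matching_outside_def by blast
  then show "y = z" using inj xyz by (auto dest: inj_onD)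
qed

lemma matching_outside_gunion:
  assumes "matching_outside H A" "matching_outside K B"
  shows "matching_outside (gunion H K) (Inl ` A \<union> Inr ` B)"
  unfolding matching_outside_def
proof (intro ballI impI)
  fix x y z
  assume "x \<in> fst (gunion H K) - (Inl ` A \<union> Inr ` B)" "y \<in> fst (gunion H K) - (Inl ` A \<union> Inr ` B)"
    "z \<in> fst (gunion H K) - (Inl ` A \<union> Inr ` B)"
    "snd (gunion H K) x y" "snd (gunion H K) x z"
  then show "y = z"
    using assms unfolding matching_outside_def gunion_def
    by (cases x; cases y; cases z) (auto simp: image_iff)
qed

lemma copies_K2_simps:
  "fst (copies n (complete_graph 2)) = {..<2} \<times> {..<n}"
  "snd (copies n (complete_graph 2)) a b \<longleftrightarrow>
     snd a = snd b \<and> snd a < n \<and> fst a < 2 \<and> fst b < 2 \<and> fst a \<noteq> fst b"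
  by (simp add: copies_def complete_graph_def)
    (cases a; cases b; simp add: copies_def complete_graph_def)

lemma matching_outside_copies_K2: "matching_outside (copies n (complete_graph 2)) {}"
  by (auto simp: matching_outside_def copies_def complete_graph_def)

lemma small_graphs_P3_and_matching_minus_vertex:
  assumes "H \<in> {cycle_graph 3, path_graph 3, path_graph 4, path_graph 5}"
  shows "\<exists>k\<in>fst H. matching_outside H {k}" and "P3_in H 0 1 2"
proof -
  have lt: "{..<3::nat} = {0, 1, 2}" "{..<4::nat} = {0, 1, 2, 3}" "{..<5::nat} = {0, 1, 2, 3, 4}"
    by auto
  have "matching_outside (cycle_graph 3) {0}" "matching_outside (path_graph 3) {1}"
    "matching_outside (path_graph 4) {1}" "matching_outside (path_graph 5) {2}"
    by (simp_all add: matching_outside_def cycle_graph_def path_graph_def lt insert_Diff_if)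
  then show "\<exists>k\<in>fst H. matching_outside H {k}"
    using assms by (auto simp: cycle_graph_def path_graph_def)
  show "P3_in H 0 1 2"
    using assms by (auto simp: P3_in_def cycle_graph_def path_graph_def)
qed

lemma graph_iso_copies_K2_add_edge:
  assumes H: "simple_graph H"
    and iso: "graph_iso (fst H - {u, v}, snd H) (copies n (complete_graph 2))"
    and uv: "u \<in> fst H" "v \<in> fst H" "snd H u v"
    and only_u: "\<And>x. snd H u x \<Longrightarrow> x = v" and only_v: "\<And>x. snd H v x \<Longrightarrow> x = u"
  shows "graph_iso H (copies (Suc n) (complete_graph 2))"
proof -
  define W where "W = fst H - {u, v}"
  obtain g where g: "bij_betw g W ({..<2} \<times> {..<n})"
    and adj: "\<forall>x\<in>W. \<forall>y\<in>W. snd H x y \<longleftrightarrow> snd (copies n (complete_graph 2)) (g x) (g y)"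
    using iso by (auto simp: graph_iso_def copies_K2_simps W_def)
  have sym: "\<And>x y. snd H x y \<Longrightarrow> snd H y x" and "u \<noteq> v"
    using H uv(3) by (auto simp: simple_graph_def)
  define f where "f = g(u := (0, n), v := (1, n))"
  have "bij_betw f W ({..<2} \<times> {..<n})"
    using g by (rule bij_betw_cong[THEN iffD1, rotated]) (auto simp: f_def W_def)
  moreover have "bij_betw f {u, v} {(0, n), (1, n)}"
    using \<open>u \<noteq> v\<close> by (auto simp: bij_betw_def f_def)
  ultimately have "bij_betw f (W \<union> {u, v}) ({..<2} \<times> {..<n} \<union> {(0, n), (1, n)})"
    by (rule bij_betw_combine) auto
  moreover have "W \<union> {u, v} = fst H" using uv by (auto simp: W_def)
  moreover have "{..<2} \<times> {..<n} \<union> {(0, n), (1, n)} = {..<2::nat} \<times> {..<Suc n}"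
    by (auto simp: less_Suc_eq)
  ultimately have bij: "bij_betw f (fst H) ({..<2} \<times> {..<Suc n})" by simp
  have fW: "f x = g x" "g x \<in> {..<2} \<times> {..<n}" if "x \<in> W" for x
    using that bij_betwE[OF g] by (auto simp: f_def W_def)
  have fuv: "f u = (0, n)" "f v = (1, n)" using \<open>u \<noteq> v\<close> by (simp_all add: f_def)
  have row: "snd (f z) = n \<longleftrightarrow> z \<in> {u, v}" "fst (f z) < 2" if "z \<in> fst H" for z
    using that fuv fW[of z] by (cases "z \<in> W"; auto simp: W_def mem_Times_iff)+
  have "snd H x y \<longleftrightarrow> snd (copies (Suc n) (complete_graph 2)) (f x) (f y)"
    if "x \<in> fst H" "y \<in> fst H" for x y
  proof (cases "x \<in> W \<and> y \<in> W")
    case True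
    then show ?thesis
      using adj fW[of x] fW[of y] by (auto simp: copies_K2_simps mem_Times_iff)
  next
    case False
    then have "x \<in> {u, v} \<or> y \<in> {u, v}" using that by (auto simp: W_def)
    then have "snd H x y \<longleftrightarrow> x = u \<and> y = v \<or> x = v \<and> y = u"
      using only_u only_v sym uv(3) by blast
    moreover have "snd (copies (Suc n) (complete_graph 2)) (f x) (f y)
        \<longleftrightarrow> x \<in> {u, v} \<and> y \<in> {u, v} \<and> fst (f x) \<noteq> fst (f y)"
      using \<open>x \<in> {u, v} \<or> y \<in> {u, v}\<close> row[OF that(1)] row[OF that(2)]
      by (auto simp: copies_K2_simps)
    moreover have "\<dots> \<longleftrightarrow> x = u \<and> y = v \<or> x = v \<and> y = u"
      using fuv \<open>u \<noteq> v\<close> by auto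
    ultimately show ?thesis by simp
  qed
  with bij show ?thesis by (auto simp: graph_iso_def copies_K2_simps)
qed

lemma graph_iso_copies_K2:
  assumes "simple_graph H" "\<forall>x\<in>fst H. \<exists>y. snd H x y" "matching_outside H {}"
  shows "graph_iso H (copies (card (fst H) div 2) (complete_graph 2))"
  using assms
proof (induction "card (fst H)" arbitrary: H rule: less_induct)
  case less
  show ?case
  proof (cases "fst H = {}")
    case True
    then show ?thesis by (auto simp: graph_iso_def copies_K2_simps bij_betw_def)
  next
    case False
    then obtain u where u: "u \<in> fst H" by blast
    then obtain v where uv: "snd H u v" using less.prems(2) by blast
    have fin: "finite (fst H)" and sym: "\<And>x y. snd H x y \<Longrightarrow> snd H y x"
      and irrefl: "\<And>x. \<not> snd H x x" and edge: "\<And>x y. snd H x y \<Longrightarrow> x \<in> fst H \<and> y \<in> fst H"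
      using less.prems(1) by (auto simp: simple_graph_def)
    have unique: "\<And>x y z. snd H x y \<Longrightarrow> snd H x z \<Longrightarrow> y = z"
      using less.prems(3) edge unfolding matching_outside_def by blast
    have "v \<in> fst H" "u \<noteq> v" using edge[OF uv] irrefl uv by auto
    define W where "W = fst H - {u, v}"
    define H' where "H' = (W, \<lambda>x y. snd H x y \<and> x \<in> W \<and> y \<in> W)"
    have "card {u, v} \<le> card (fst H)"
      using fin u \<open>v \<in> fst H\<close> by (intro card_mono) auto
    then have card: "card (fst H) = Suc (Suc (card W))"
      using fin u \<open>v \<in> fst H\<close> \<open>u \<noteq> v\<close> by (simp add: W_def card_Diff_subset)
    have "simple_graph H'"
      using fin sym irrefl by (auto simp: simple_graph_def H'_def W_def)
    moreover have "\<forall>x\<in>fst H'. \<exists>y. snd H' x y"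
    proof
      fix x assume "x \<in> fst H'"
      then have "x \<in> W" by (simp add: H'_def)
      then obtain y where "snd H x y" using less.prems(2) by (auto simp: W_def)
      moreover from this have "y \<noteq> u" "y \<noteq> v"
        using unique[OF sym uv] unique[OF sym sym[OF uv]] \<open>x \<in> W\<close> by (auto simp: W_def)
      ultimately show "\<exists>y. snd H' x y" using edge \<open>x \<in> W\<close> by (auto simp: H'_def W_def)
    qed
    moreover have "matching_outside H' {}"
      using unique by (auto simp: matching_outside_def H'_def)
    ultimately have "graph_iso H' (copies (card W div 2) (complete_graph 2))"
      using less.hyps[of H'] card by (simp add: H'_def)
    then obtain g where "bij_betw g W (fst (copies (card W div 2) (complete_graph 2)))"
      and "\<forall>x\<in>W. \<forall>y\<in>W. (snd H x y \<and> x \<in> W \<and> y \<in> W)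
        \<longleftrightarrow> snd (copies (card W div 2) (complete_graph 2)) (g x) (g y)"
      unfolding graph_iso_def H'_def fst_conv snd_conv by blast
    then have "graph_iso (fst H - {u, v}, snd H) (copies (card W div 2) (complete_graph 2))"
      unfolding graph_iso_def fst_conv snd_conv W_def by blast
    from graph_iso_copies_K2_add_edge[OF less.prems(1) this u \<open>v \<in> fst H\<close> uv
        unique[OF _ uv] unique[OF _ sym[OF uv]]]
    have "graph_iso H (copies (Suc (card W div 2)) (complete_graph 2))" .
    with card show ?thesis by simp
  qed
qed

lemma matching_outside_empty_graph_iso:
  assumes "graph_iso A B" "matching_outside B {}"
  shows "matching_outside A {}"
proof -
  obtain f where "bij_betw f (fst A) (fst B)" "\<forall>x\<in>fst A. \<forall>y\<in>fst A. snd A x y \<longleftrightarrow> snd B (f x) (f y)"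
    using assms(1) by (auto simp: graph_iso_def)
  then show ?thesis using matching_outside_iso[of f A B "{}"] assms(2) by simp
qed

lemma matching_outside_singleton_graph_iso:
  assumes "graph_iso A B" "k \<in> fst B" "matching_outside B {k}"
  obtains c where "c \<in> fst A" "matching_outside A {c}"
proof -
  obtain f where f: "bij_betw f (fst A) (fst B)"
    and adj: "\<forall>x\<in>fst A. \<forall>y\<in>fst A. snd A x y \<longleftrightarrow> snd B (f x) (f y)"
    using assms(1) by (auto simp: graph_iso_def)
  define c where "c = inv_into (fst A) f k"
  have "c \<in> fst A" using bij_betwE[OF bij_betw_inv_into[OF f]] assms(2) by (simp add: c_def)
  moreover have "f c = k" using bij_betw_inv_into_right[OF f assms(2)] by (simp add: c_def)
  ultimately
  show ?thesis
    using matching_outside_iso[OF f adj, of "{c}"] assms(3) that by simp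
qed

section \<open>The Maker--Breaker strong resolving game\<close>

lemma maker_wins_imp_not_breaker_wins:
  "maker_wins G t Mk Br \<Longrightarrow> \<not> breaker_wins G t Mk Br"
  by (induction rule: maker_wins.induct) (auto elim: breaker_wins.cases)

context connected_simple_graph
begin

lemma P3_in_SR_iff [simp]: "P3_in SR a b c \<longleftrightarrow> mmd G b a \<and> mmd G b c \<and> a \<noteq> c"
  by (auto simp: P3_in_def dest: mmd_in_V[of G] mmd_commute)

lemma mmd_in_SR: "mmd G u v \<Longrightarrow> u \<in> fst SR \<and> v \<in> fst SR"
  using mmd_in_V[of G] mmd_commute by fastforce

lemma matching_outside_SR_iff:
  "matching_outside SR A \<longleftrightarrow>
     (\<forall>u v w. mmd G u v \<longrightarrow> mmd G u w \<longrightarrow> u \<notin> A \<longrightarrow> v \<notin> A \<longrightarrow> w \<notin> A \<longrightarrow> v = w)"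
  unfolding matching_outside_def SR_simps(2) using mmd_in_SR by blast

abbreviation "free Mk Br \<equiv> V - Mk - Br"

lemma card_free_insert_less:
  assumes "v \<in> free Mk Br"
  shows "card (free (insert v Mk) Br) < card (free Mk Br)"
    and "card (free Mk (insert v Br)) < card (free Mk Br)"
proof -
  have "card (free Mk Br - {v}) < card (free Mk Br)"
    using assms finite_V by (intro card_Diff1_less) auto
  moreover have "free (insert v Mk) Br = free Mk Br - {v}"
    and "free Mk (insert v Br) = free Mk Br - {v}"
    by auto
  ultimately show "card (free (insert v Mk) Br) < card (free Mk Br)"
    and "card (free Mk (insert v Br)) < card (free Mk Br)"
    by simp_all
qed

lemma breaker_wins_if_owns_mmd_pair:
  assumes "mmd G a b" "a \<in> Br" "b \<in> Br" "a \<notin> Mk" "b \<notin> Mk"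
  shows "breaker_wins G t Mk Br"
  using assms
proof (induction "card (free Mk Br)" arbitrary: t Mk Br rule: less_induct)
  case less
  show ?case
  proof (cases "free Mk Br = {}")
    case True
    have "\<not> vertex_cover SR Mk" using less.prems by (auto simp: vertex_cover_def)
    then show ?thesis
      using True by (intro breaker_wins.end_game) (auto simp: contains_strong_resolving_set_iff)
  next
    case False
    then obtain v where v: "v \<in> free Mk Br" by blast
    show ?thesis
    proof (cases t)
      case True
      have "breaker_wins G False (insert v Mk) Br" if "v \<in> free Mk Br" for v
        using less.hyps[OF card_free_insert_less(1)[OF that]] less.prems that by auto
      with False True show ?thesis by (auto intro: breaker_wins.maker_move)
    next
      case False
      have "breaker_wins G True Mk (insert v Br)"
        using less.hyps[OF card_free_insert_less(2)[OF v]] less.prems v by auto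
      with False v show ?thesis by (auto intro: breaker_wins.breaker_move)
    qed
  qed
qed

lemma breaker_wins_owning_centre:
  assumes "P3_in SR a b c" "b \<in> Br" "b \<notin> Mk" "a \<in> free Mk Br" "c \<in> free Mk Br"
  shows "breaker_wins G True Mk Br"
proof (rule breaker_wins.maker_move)
  show "\<forall>v\<in>free Mk Br. breaker_wins G False (insert v Mk) Br"
  proof
    fix v assume "v \<in> free Mk Br"
    obtain a' where "mmd G b a'" "a' \<in> free (insert v Mk) Br"
      using assms by (cases "v = a") auto
    moreover from this have "breaker_wins G True (insert v Mk) (insert a' Br)"
      using assms \<open>v \<in> free Mk Br\<close>
      by (intro breaker_wins_if_owns_mmd_pair[of b a']) (auto dest: mmd_commute)
    ultimately show "breaker_wins G False (insert v Mk) Br"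
      by (intro breaker_wins.breaker_move)
  qed
qed (use assms in auto)

lemma P3_in_SR_vertices: "P3_in SR a b c \<Longrightarrow> {a, b, c} \<subseteq> V \<and> a \<noteq> b \<and> c \<noteq> b"
  using mmd_in_V[of G b a] mmd_in_V[of G b c] by auto

lemma breaker_wins_free_P3:
  assumes "P3_in SR a b c" "{a, b, c} \<inter> (Mk \<union> Br) = {}"
  shows "breaker_wins G False Mk Br"
proof (rule breaker_wins.breaker_move)
  have "{a, b, c} \<subseteq> V" "a \<noteq> b" "c \<noteq> b"
    using P3_in_SR_vertices[OF assms(1)] by simp_all
  then show "b \<in> free Mk Br" "breaker_wins G True Mk (insert b Br)"
    using assms by (auto intro!: breaker_wins_owning_centre[of a b c])
qed

lemma O_SR_B_if_P3_robust:
  assumes "P3_robust SR"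
  shows "O_SR_B G"
proof -
  obtain a b c where "P3_in SR a b c"
    using assms by (auto simp: P3_robust_def)
  then have "breaker_wins G False {} {}"
    by (rule breaker_wins_free_P3) simp
  moreover have "breaker_wins G True {} {}"
  proof (rule breaker_wins.maker_move)
    show "free {} {} \<noteq> {}"
      using P3_in_SR_vertices[OF \<open>P3_in SR a b c\<close>] by auto
    show "\<forall>v\<in>free {} {}. breaker_wins G False {v} {}"
    proof
      fix v
      obtain a b c where "P3_in SR a b c" "v \<notin> {a, b, c}"
        using P3_robust_avoiding[OF assms] by blast
      then show "breaker_wins G False {v} {}"
        by (intro breaker_wins_free_P3[of a b c]) auto
    qed
  qed
  ultimately show ?thesis by (simp add: O_SR_B_def)
qed

text \<open>Invariant of Maker's pairing strategy: the MMD pairs not covered by Maker are pairwise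
  disjoint and untouched by Breaker.\<close>
definition maker_safe :: "'a set \<Rightarrow> 'a set \<Rightarrow> bool" where
  "maker_safe Mk Br \<longleftrightarrow> (\<forall>u v. mmd G u v \<longrightarrow> u \<in> Mk \<or> v \<in> Mk \<or> u \<notin> Br \<and> v \<notin> Br)
     \<and> matching_outside SR Mk"

lemma maker_safe_insert_Mk: "maker_safe Mk Br \<Longrightarrow> maker_safe (insert v Mk) Br"
  by (auto simp: maker_safe_def matching_outside_SR_iff)

lemma maker_safe_answer:
  assumes "maker_safe Mk Br" "v \<in> free Mk Br" "mmd G v w" "w \<notin> Mk"
  shows "w \<in> free Mk (insert v Br)" and "maker_safe (insert w Mk) (insert v Br)"
proof -
  have safe: "\<And>u u'. mmd G u u' \<Longrightarrow> u \<in> Mk \<or> u' \<in> Mk \<or> u \<notin> Br \<and> u' \<notin> Br"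
    and unique: "\<And>u u' u''. mmd G u u' \<Longrightarrow> mmd G u u'' \<Longrightarrow> u \<notin> Mk \<Longrightarrow> u' \<notin> Mk \<Longrightarrow> u'' \<notin> Mk
      \<Longrightarrow> u' = u''"
    using assms(1) by (auto simp: maker_safe_def matching_outside_SR_iff)
  show "w \<in> free Mk (insert v Br)"
    using safe[OF assms(3)] assms(2,4) mmd_in_V[OF assms(3)] by auto
  have "u \<notin> insert v Br \<and> u' \<notin> insert v Br"
    if uu': "mmd G u u'" "u \<notin> insert w Mk" "u' \<notin> insert w Mk" for u u'
  proof -
    have "u \<notin> Br \<and> u' \<notin> Br" using safe[OF uu'(1)] uu'(2,3) by blast
    moreover have "u \<noteq> v" using unique[of v u' w] uu' assms(2-4) by blast
    moreover have "u' \<noteq> v" using unique[of v u w] mmd_commute[OF uu'(1)] uu' assms(2-4) by blast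
    ultimately show ?thesis by blast
  qed
  then show "maker_safe (insert w Mk) (insert v Br)"
    using assms(1) by (auto simp: maker_safe_def matching_outside_SR_iff)
qed

lemma maker_safe_unpaired:
  assumes "maker_safe Mk Br" "\<And>w. mmd G v w \<Longrightarrow> w \<in> Mk"
  shows "maker_safe Mk (insert v Br)"
  using assms mmd_commute[of G] by (auto simp: maker_safe_def)

lemma maker_wins_if_safe:
  assumes "maker_safe Mk Br"
  shows "maker_wins G t Mk Br"
  using assms
proof (induction "card (free Mk Br)" arbitrary: t Mk Br rule: less_induct)
  case less
  show ?case
  proof (cases "free Mk Br = {}")
    case True
    with less.prems have "vertex_cover SR Mk"
      by (auto simp: vertex_cover_def maker_safe_def dest: mmd_in_V[of G])
    with True show ?thesis
      by (intro maker_wins.end_game) (auto simp: contains_strong_resolving_set_iff)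
  next
    case False
    show ?thesis
    proof (cases t)
      case True
      obtain v where v: "v \<in> free Mk Br" using False by blast
      with less show ?thesis
        using card_free_insert_less(1)[OF v] maker_safe_insert_Mk True
        by (auto intro: maker_wins.maker_move[OF v])
    next
      case t: False
      have "maker_wins G True Mk (insert v Br)" if v: "v \<in> free Mk Br" for v
      proof (cases "\<exists>w. mmd G v w \<and> w \<notin> Mk")
        case True
        then obtain w where "mmd G v w" "w \<notin> Mk" by blast
        note answer = maker_safe_answer[OF less.prems v this]
        have "card (free (insert w Mk) (insert v Br)) < card (free Mk Br)"
          using card_free_insert_less(1)[OF answer(1)] card_free_insert_less(2)[OF v] by linarith
        then have "maker_wins G False (insert w Mk) (insert v Br)"
          using less.hyps answer(2) by blast
        then show ?thesis by (intro maker_wins.maker_move[OF answer(1)])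
      next
        case False
        then show ?thesis
          using less.hyps[OF card_free_insert_less(2)[OF v]] maker_safe_unpaired[OF less.prems]
          by blast
      qed
      with False t show ?thesis by (auto intro: maker_wins.breaker_move)
    qed
  qed
qed

lemma simple_graph_SR: "simple_graph SR"
proof -
  have "finite (fst SR)" using finite_V by simp
  moreover have "\<not> mmd G x x" for x using mmd_in_V[of G x x] by blast
  ultimately show ?thesis
    using mmd_in_SR mmd_commute[of G] unfolding simple_graph_def SR_simps(2) by blast
qed

lemma mmd_exists:
  assumes "card V \<ge> 2"
  obtains u v where "mmd G u v"
proof -
  have "\<not> card V \<le> Suc 0" using assms by simp
  then obtain x y where xy: "x \<in> V" "y \<in> V" "x \<noteq> y"
    using card_le_Suc0_iff_eq[OF finite_V] by blast
  show ?thesis using mmd_pair_through[OF xy] that by blast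
qed

lemma maker_wins_if_matching_outside:
  "matching_outside SR Mk \<Longrightarrow> maker_wins G t Mk {}"
  by (rule maker_wins_if_safe) (simp add: maker_safe_def)

lemma O_SR_M_iff:
  assumes "card V \<ge> 2"
  shows "O_SR_M G \<longleftrightarrow> (\<exists>x>0. graph_iso SR (copies x (complete_graph 2)))"
proof
  assume "O_SR_M G"
  then have "\<not> breaker_wins G False {} {}"
    using maker_wins_imp_not_breaker_wins[of G] by (auto simp: O_SR_M_def)
  then have "\<nexists>a b c. P3_in SR a b c"
    using breaker_wins_free_P3 by blast
  then have "graph_iso SR (copies (card (fst SR) div 2) (complete_graph 2))"
    using graph_iso_copies_K2[OF simple_graph_SR] by (simp add: matching_outside_empty_iff)
  moreover have "card (fst SR) \<ge> 2"
  proof -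
    obtain u v where "mmd G u v" using mmd_exists[OF assms] by blast
    then have "{u, v} \<subseteq> fst SR" "card {u, v} = 2"
      using mmd_in_SR mmd_in_V[of G u v] by auto
    moreover have "finite (fst SR)" using finite_V by simp
    ultimately show ?thesis by (metis card_mono)
  qed
  ultimately show "\<exists>x>0. graph_iso SR (copies x (complete_graph 2))"
    by (intro exI[of _ "card (fst SR) div 2"]) auto
next
  assume "\<exists>x>0. graph_iso SR (copies x (complete_graph 2))"
  then have "matching_outside SR {}"
    using matching_outside_empty_graph_iso matching_outside_copies_K2 by blast
  then show "O_SR_M G"
    using maker_wins_if_matching_outside by (simp add: O_SR_M_def)
qed

lemma O_SR_N_if_iso_gunion:
  assumes iso: "graph_iso SR (gunion H (copies x (complete_graph 2)))"
    and "k \<in> fst H" "matching_outside H {k}" and "P3_in H a b c"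
  shows "O_SR_N G"
proof -
  let ?U = "gunion H (copies x (complete_graph 2))"
  have k: "Inl k \<in> fst ?U" using assms(2) by (simp add: gunion_def)
  have "matching_outside ?U {Inl k}"
    using matching_outside_gunion[OF assms(3) matching_outside_copies_K2] by simp
  then obtain c0 where "c0 \<in> fst SR" "matching_outside SR {c0}"
    using matching_outside_singleton_graph_iso[OF iso k] by blast
  then have "c0 \<in> free {} {}" "maker_wins G False (insert c0 {}) {}"
    using maker_wins_if_matching_outside by auto
  then have "maker_wins G True {} {}"
    by (rule maker_wins.maker_move)
  moreover have "P3_in ?U (Inl a) (Inl b) (Inl c)"
    using assms(4) by (simp add: P3_in_def gunion_def)
  then obtain a' b' c' where "P3_in SR a' b' c'"
    using P3_in_subgraph[OF graph_iso_imp_subgraph_of[OF iso]] by blast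
  then have "breaker_wins G False {} {}"
    by (rule breaker_wins_free_P3) simp
  ultimately show ?thesis by (simp add: O_SR_N_def)
qed

end

theorem mainTheorem3:
  fixes G :: "'a graph"
  assumes "simple_graph G" and "connected_graph G" and "card (fst G) \<ge> 2"
  shows "(O_SR_M G \<longleftrightarrow>
            (\<exists>x::nat. x > 0 \<and> graph_iso (strong_resolving_graph G) (copies x (complete_graph 2))))
       \<and> (\<forall>(H::nat graph) (x::nat). H \<in> {cycle_graph 3, path_graph 3, path_graph 4, path_graph 5} \<longrightarrow>
            graph_iso (strong_resolving_graph G) (gunion H (copies x (complete_graph 2))) \<longrightarrow> O_SR_N G)
       \<and> (\<forall>(m::nat) (H::nat graph). m \<ge> 4 \<longrightarrow>
            H \<in> {complete_graph m, cycle_graph m, path_graph (m + 2)} \<longrightarrow>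
            subgraph_of H (strong_resolving_graph G) \<longrightarrow> O_SR_B G)
       \<and> (\<forall>x y::nat. x + y \<ge> 2 \<longrightarrow>
            subgraph_of (gunion (copies x (cycle_graph 3)) (copies y (path_graph 3)))
                        (strong_resolving_graph G) \<longrightarrow> O_SR_B G)"
proof -
  interpret connected_simple_graph G
    using assms(1,2) by unfold_locales
  show ?thesis
  proof (intro conjI allI impI)
    show "O_SR_M G \<longleftrightarrow> (\<exists>x>0. graph_iso SR (copies x (complete_graph 2)))"
      by (rule O_SR_M_iff[OF assms(3)])
  next
    fix H :: "nat graph" and x
    assume "H \<in> {cycle_graph 3, path_graph 3, path_graph 4, path_graph 5}"
      and iso: "graph_iso SR (gunion H (copies x (complete_graph 2)))"
    then obtain k where "k \<in> fst H" "matching_outside H {k}" "P3_in H 0 1 2"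
      using small_graphs_P3_and_matching_minus_vertex by blast
    then show "O_SR_N G" by (rule O_SR_N_if_iso_gunion[OF iso])
  next
    fix m :: nat and H :: "nat graph"
    assume "m \<ge> 4" "H \<in> {complete_graph m, cycle_graph m, path_graph (m + 2)}"
      and sub: "subgraph_of H SR"
    then have "P3_robust H"
      using P3_robust_complete_graph P3_robust_cycle_graph P3_robust_path_graph[of "m + 2"] by auto
    then show "O_SR_B G" by (rule O_SR_B_if_P3_robust[OF P3_robust_subgraph[OF sub]])
  next
    fix x y :: nat
    assume "x + y \<ge> 2"
      and sub: "subgraph_of (gunion (copies x (cycle_graph 3)) (copies y (path_graph 3))) SR"
    then show "O_SR_B G"
      by (intro O_SR_B_if_P3_robust P3_robust_subgraph[OF sub] P3_robust_triangles_and_cherries)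
  qed
qed

end
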